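(* Let $M$ be a graded $R$-module. If the map $\psi^q$ is surjective, then for every $r\in h(R)$ the open set $GX_r^{qp.M}$ of $qp.Spec_g(M)$ (with the quasi-Zariski topology) is quasi-compact. In particular, $qp.Spec_g(M)$ with the quasi-Zariski topology is quasi-compact.
   Context: $R=\bigoplus_{g\in G}R_g$ is a graded commutative ring with identity graded by a group $G$, $h(R)=\bigcup_g R_g$; $M$ is a graded $R$-module, $h(M)$ its homogeneous elements. $Gr(I)$ is the graded radical of a graded ideal $I$. $(K:_RM)=\{r: rM\subseteq K\}$. Graded prime submodule: proper graded $P$ with $rm\in P$ ($r\in h(R), m\in h(M)$) implying $m\in P$ or $r\in(P:_RM)$. $Gr_M(K)$: intersection of graded prime submodules containing $K$ ($M$ if none). Graded primeful property of $K$: for each graded prime $p\supseteq(K:_RM)$ there is a graded prime submodule $P\supseteq K$ with $(P:_RM)=p$. Graded quasi-primary submodule: proper graded $Q$ with $rm\in Q$ ($r\in h(R),m\in h(M)$) implying $r\in Gr((Q:_RM))$ or $m\in Gr_M(Q)$. $qp.Spec_g(M)$: graded quasi-primary submodules with the graded primeful property. $qp\text{-}V_M^g(K)=\{Q\in qp.Spec_g(M): Gr((Q:_RM))\supseteq Gr((K:_RM))\}$; the quasi-Zariski topology has closed sets exactly these. $GX_r^{qp.M}=qp.Spec_g(M)\setminus qp\text{-}V_M^g(rM)$. $\overline R=R/\mathrm{Ann}(M)$. A graded quasi-primary ideal of $\overline R$ is a proper graded ideal $q$ with $ab\in q$ ($a,b$ homogeneous) implying $a\in Gr(q)$ or $b\in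 Gr(q)$; $qp.Spec_g(\overline R)$ is the set of them. $\psi^q:qp.Spec_g(M)\to qp.Spec_g(\overline R)$ is $\psi^q(Q)=(Q:_RM)/\mathrm{Ann}(M)$. *)

theory Defs
  imports "HOL-Algebra.Algebra"
begin

text \<open>A grading of the additive structure of A (a ring, or the additive group of a module)
  by the family Ag: c is the homogeneous decomposition of x.\<close>
definition gdecomp :: "('x, 'e) ring_scheme \<Rightarrow> ('g \<Rightarrow> 'x set) \<Rightarrow> 'x \<Rightarrow> ('g \<Rightarrow> 'x) \<Rightarrow> bool" where
  "gdecomp A Ag x c \<longleftrightarrow> (\<forall>g. c g \<in> Ag g) \<and> finite {g. c g \<noteq> \<zero>\<^bsub>A\<^esub>}
      \<and> x = finsum A c {g. c g \<noteq> \<zero>\<^bsub>A\<^esub>}"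

definition gcomp :: "('x, 'e) ring_scheme \<Rightarrow> ('g \<Rightarrow> 'x set) \<Rightarrow> 'x \<Rightarrow> 'g \<Rightarrow> 'x" where
  "gcomp A Ag x = (THE c. gdecomp A Ag x c)"

definition hom_elems :: "('g \<Rightarrow> 'x set) \<Rightarrow> 'x set" where
  "hom_elems Ag = (\<Union>g. Ag g)"

definition direct_sum_grading :: "('x, 'e) ring_scheme \<Rightarrow> ('g \<Rightarrow> 'x set) \<Rightarrow> bool" where
  "direct_sum_grading A Ag \<longleftrightarrow> (\<forall>g. additive_subgroup (Ag g) A)
      \<and> (\<forall>x \<in> carrier A. \<exists>!c. gdecomp A Ag x c)"

definition graded_ring :: "('a, 'c) ring_scheme \<Rightarrow> ('g::group_add \<Rightarrow> 'a set) \<Rightarrow> bool" where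
  "graded_ring R Rg \<longleftrightarrow> cring R \<and> direct_sum_grading R Rg
      \<and> (\<forall>g h. \<forall>a \<in> Rg g. \<forall>b \<in> Rg h. a \<otimes>\<^bsub>R\<^esub> b \<in> Rg (g + h))"

definition graded_module ::
  "('a, 'c) ring_scheme \<Rightarrow> ('g::group_add \<Rightarrow> 'a set) \<Rightarrow> ('a, 'b) module \<Rightarrow> ('g \<Rightarrow> 'b set) \<Rightarrow> bool" where
  "graded_module R Rg M Mg \<longleftrightarrow> graded_ring R Rg \<and> module R M \<and> direct_sum_grading M Mg
      \<and> (\<forall>g h. \<forall>a \<in> Rg g. \<forall>m \<in> Mg h. a \<odot>\<^bsub>M\<^esub> m \<in> Mg (g + h))"

definition graded_ideal :: "('a, 'c) ring_scheme \<Rightarrow> ('g \<Rightarrow> 'a set) \<Rightarrow> 'a set \<Rightarrow> bool" where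
  "graded_ideal R Rg I \<longleftrightarrow> ideal I R \<and> (\<forall>x \<in> I. \<forall>g. gcomp R Rg x g \<in> I)"

definition graded_radical :: "('a, 'c) ring_scheme \<Rightarrow> ('g \<Rightarrow> 'a set) \<Rightarrow> 'a set \<Rightarrow> 'a set" where
  "graded_radical R Rg I = {x \<in> carrier R. \<forall>g. \<exists>n::nat. n > 0 \<and> gcomp R Rg x g [^]\<^bsub>R\<^esub> n \<in> I}"

definition graded_prime_ideal :: "('a, 'c) ring_scheme \<Rightarrow> ('g \<Rightarrow> 'a set) \<Rightarrow> 'a set \<Rightarrow> bool" where
  "graded_prime_ideal R Rg p \<longleftrightarrow> graded_ideal R Rg p \<and> p \<noteq> carrier R
      \<and> (\<forall>a \<in> hom_elems Rg. \<forall>b \<in> hom_elems Rg. a \<otimes>\<^bsub>R\<^esub> b \<in> p \<longrightarrow> a \<in> p \<or> b \<in> p)"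

definition graded_qp_ideal :: "('a, 'c) ring_scheme \<Rightarrow> ('g \<Rightarrow> 'a set) \<Rightarrow> 'a set \<Rightarrow> bool" where
  "graded_qp_ideal R Rg q \<longleftrightarrow> graded_ideal R Rg q \<and> q \<noteq> carrier R
      \<and> (\<forall>a \<in> hom_elems Rg. \<forall>b \<in> hom_elems Rg. a \<otimes>\<^bsub>R\<^esub> b \<in> q \<longrightarrow>
            a \<in> graded_radical R Rg q \<or> b \<in> graded_radical R Rg q)"

definition qp_spec_ring :: "('a, 'c) ring_scheme \<Rightarrow> ('g \<Rightarrow> 'a set) \<Rightarrow> 'a set set" where
  "qp_spec_ring R Rg = {q. graded_qp_ideal R Rg q}"

definition graded_submodule ::
  "('a, 'c) ring_scheme \<Rightarrow> ('a, 'b) module \<Rightarrow> ('g \<Rightarrow> 'b set) \<Rightarrow> 'b set \<Rightarrow> bool" where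
  "graded_submodule R M Mg N \<longleftrightarrow> submodule N R M \<and> (\<forall>x \<in> N. \<forall>g. gcomp M Mg x g \<in> N)"

definition colon :: "('a, 'c) ring_scheme \<Rightarrow> ('a, 'b) module \<Rightarrow> 'b set \<Rightarrow> 'a set" where
  "colon R M K = {r \<in> carrier R. \<forall>m \<in> carrier M. r \<odot>\<^bsub>M\<^esub> m \<in> K}"

definition Ann :: "('a, 'c) ring_scheme \<Rightarrow> ('a, 'b) module \<Rightarrow> 'a set" where
  "Ann R M = colon R M {\<zero>\<^bsub>M\<^esub>}"

definition graded_prime_submodule ::
  "('a, 'c) ring_scheme \<Rightarrow> ('g \<Rightarrow> 'a set) \<Rightarrow> ('a, 'b) module \<Rightarrow> ('g \<Rightarrow> 'b set) \<Rightarrow> 'b set \<Rightarrow> bool" where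
  "graded_prime_submodule R Rg M Mg P \<longleftrightarrow> graded_submodule R M Mg P \<and> P \<noteq> carrier M
      \<and> (\<forall>r \<in> hom_elems Rg. \<forall>m \<in> hom_elems Mg. r \<odot>\<^bsub>M\<^esub> m \<in> P \<longrightarrow> m \<in> P \<or> r \<in> colon R M P)"

text \<open>Gr_M(K): intersection of graded prime submodules containing K (M if there are none).\<close>
definition graded_mradical ::
  "('a, 'c) ring_scheme \<Rightarrow> ('g \<Rightarrow> 'a set) \<Rightarrow> ('a, 'b) module \<Rightarrow> ('g \<Rightarrow> 'b set) \<Rightarrow> 'b set \<Rightarrow> 'b set" where
  "graded_mradical R Rg M Mg K =
     carrier M \<inter> \<Inter>{P. graded_prime_submodule R Rg M Mg P \<and> K \<subseteq> P}"

definition graded_primeful ::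
  "('a, 'c) ring_scheme \<Rightarrow> ('g \<Rightarrow> 'a set) \<Rightarrow> ('a, 'b) module \<Rightarrow> ('g \<Rightarrow> 'b set) \<Rightarrow> 'b set \<Rightarrow> bool" where
  "graded_primeful R Rg M Mg K \<longleftrightarrow>
     (\<forall>p. graded_prime_ideal R Rg p \<and> colon R M K \<subseteq> p \<longrightarrow>
        (\<exists>P. graded_prime_submodule R Rg M Mg P \<and> K \<subseteq> P \<and> colon R M P = p))"

definition graded_qp_submodule ::
  "('a, 'c) ring_scheme \<Rightarrow> ('g \<Rightarrow> 'a set) \<Rightarrow> ('a, 'b) module \<Rightarrow> ('g \<Rightarrow> 'b set) \<Rightarrow> 'b set \<Rightarrow> bool" where
  "graded_qp_submodule R Rg M Mg Q \<longleftrightarrow> graded_submodule R M Mg Q \<and> Q \<noteq> carrier M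
      \<and> (\<forall>r \<in> hom_elems Rg. \<forall>m \<in> hom_elems Mg. r \<odot>\<^bsub>M\<^esub> m \<in> Q \<longrightarrow>
            r \<in> graded_radical R Rg (colon R M Q) \<or> m \<in> graded_mradical R Rg M Mg Q)"

definition qp_spec ::
  "('a, 'c) ring_scheme \<Rightarrow> ('g \<Rightarrow> 'a set) \<Rightarrow> ('a, 'b) module \<Rightarrow> ('g \<Rightarrow> 'b set) \<Rightarrow> 'b set set" where
  "qp_spec R Rg M Mg = {Q. graded_qp_submodule R Rg M Mg Q \<and> graded_primeful R Rg M Mg Q}"

definition qp_V ::
  "('a, 'c) ring_scheme \<Rightarrow> ('g \<Rightarrow> 'a set) \<Rightarrow> ('a, 'b) module \<Rightarrow> ('g \<Rightarrow> 'b set) \<Rightarrow> 'b set \<Rightarrow> 'b set set" where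
  "qp_V R Rg M Mg K = {Q \<in> qp_spec R Rg M Mg.
      graded_radical R Rg (colon R M K) \<subseteq> graded_radical R Rg (colon R M Q)}"

definition qz_open ::
  "('a, 'c) ring_scheme \<Rightarrow> ('g \<Rightarrow> 'a set) \<Rightarrow> ('a, 'b) module \<Rightarrow> ('g \<Rightarrow> 'b set) \<Rightarrow> 'b set set \<Rightarrow> bool" where
  "qz_open R Rg M Mg U \<longleftrightarrow>
     (\<exists>K. graded_submodule R M Mg K \<and> U = qp_spec R Rg M Mg - qp_V R Rg M Mg K)"

definition qz_quasi_compact ::
  "('a, 'c) ring_scheme \<Rightarrow> ('g \<Rightarrow> 'a set) \<Rightarrow> ('a, 'b) module \<Rightarrow> ('g \<Rightarrow> 'b set) \<Rightarrow> 'b set set \<Rightarrow> bool" where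
  "qz_quasi_compact R Rg M Mg S \<longleftrightarrow>
     (\<forall>\<U>. (\<forall>U \<in> \<U>. qz_open R Rg M Mg U) \<and> S \<subseteq> \<Union>\<U> \<longrightarrow>
        (\<exists>\<F> \<subseteq> \<U>. finite \<F> \<and> S \<subseteq> \<Union>\<F>))"

definition scal_sub :: "('a, 'b) module \<Rightarrow> 'a \<Rightarrow> 'b set" where
  "scal_sub M r = {r \<odot>\<^bsub>M\<^esub> m | m. m \<in> carrier M}"

definition GX ::
  "('a, 'c) ring_scheme \<Rightarrow> ('g \<Rightarrow> 'a set) \<Rightarrow> ('a, 'b) module \<Rightarrow> ('g \<Rightarrow> 'b set) \<Rightarrow> 'a \<Rightarrow> 'b set set" where
  "GX R Rg M Mg r = qp_spec R Rg M Mg - qp_V R Rg M Mg (scal_sub M r)"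

definition Rbar :: "('a, 'c) ring_scheme \<Rightarrow> ('a, 'b) module \<Rightarrow> 'a set ring" where
  "Rbar R M = R Quot (Ann R M)"

definition Rbar_grading ::
  "('a, 'c) ring_scheme \<Rightarrow> ('g \<Rightarrow> 'a set) \<Rightarrow> ('a, 'b) module \<Rightarrow> 'g \<Rightarrow> 'a set set" where
  "Rbar_grading R Rg M g = (\<lambda>a. Ann R M +>\<^bsub>R\<^esub> a) ` Rg g"

definition psi_q :: "('a, 'c) ring_scheme \<Rightarrow> ('a, 'b) module \<Rightarrow> 'b set \<Rightarrow> 'a set set" where
  "psi_q R M Q = (\<lambda>a. Ann R M +>\<^bsub>R\<^esub> a) ` colon R M Q"

end

theory Submission
  imports Defs
begin

text \<open>
  If \<open>\<psi>\<^sup>q\<close> is surjective, every graded prime \<open>p \<supseteq> Ann(M)\<close> is \<open>(Q :\<^sub>R M)\<close> for some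
  \<open>Q \<in> qp.Spec\<^sub>g(M)\<close>. Write \<open>hull(S)\<close> for the intersection of the graded primes containing \<open>S\<close>;
  for a graded ideal it is the graded radical. For homogeneous \<open>r\<close>, \<open>Q \<in> GX\<^sub>r\<close> iff
  \<open>r \<notin> hull((Q :\<^sub>R M))\<close>, and \<open>Q \<in> qp-V(K)\<close> iff \<open>(K :\<^sub>R M) \<subseteq> hull((Q :\<^sub>R M))\<close>.
  Consequently the sets \<open>qp.Spec\<^sub>g(M) - qp-V(K\<^sub>i)\<close> cover \<open>GX\<^sub>r\<close> iff
  \<open>r \<in> hull(Ann(M) \<union> \<Union>\<^sub>i (K\<^sub>i :\<^sub>R M))\<close>, and this membership is witnessed by finitely many
  \<open>K\<^sub>i\<close>: otherwise the directed union of the hulls of the finite subfamilies is a graded ideal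
  containing no power of \<open>r\<close>, and Zorn's lemma yields a graded prime over it avoiding \<open>r\<close>.
  The whole space is \<open>GX\<^sub>1\<close>.
\<close>

section \<open>Gradings of abelian groups\<close>

lemma (in abelian_monoid) finsum_in_additive_subgroup:
  assumes "additive_subgroup H G" "finite S" "\<And>i. i \<in> S \<Longrightarrow> f i \<in> H"
  shows "finsum G f S \<in> H"
  using assms(2,3)
proof (induct S rule: finite_induct)
  case empty
  then show ?case using additive_subgroup.zero_closed[OF assms(1)] by simp
next
  case (insert x F)
  have "f \<in> F \<rightarrow> carrier G" "f x \<in> carrier G"
    using insert additive_subgroup.a_subset[OF assms(1)] by auto
  then show ?case
    using insert additive_subgroup.a_closed[OF assms(1)] by simp
qed

lemma abelian_group_homI_additive:
  assumes "abelian_group G" "abelian_group H" "\<And>x. x \<in> carrier G \<Longrightarrow> h x \<in> carrier H"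
    "\<And>x y. x \<in> carrier G \<Longrightarrow> y \<in> carrier G \<Longrightarrow> h (x \<oplus>\<^bsub>G\<^esub> y) = h x \<oplus>\<^bsub>H\<^esub> h y"
  shows "abelian_group_hom G H h"
  using assms abelian_group.a_group[OF assms(1)] abelian_group.a_group[OF assms(2)]
  by (intro abelian_group_homI group_hom.intro group_hom_axioms.intro homI) auto

lemma (in abelian_group_hom) hom_finsum:
  assumes "finite S" "f \<in> S \<rightarrow> carrier G"
  shows "h (finsum G f S) = finsum H (h \<circ> f) S"
  using assms by (induct S rule: finite_induct) (auto simp: Pi_def)

lemma (in abelian_monoid) gdecompI:
  assumes "\<And>g. c g \<in> Gg g" "\<And>g. c g \<in> carrier G" "finite S" "\<And>g. g \<notin> S \<Longrightarrow> c g = \<zero>"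
    "x = finsum G c S"
  shows "gdecomp G Gg x c"
proof -
  have support: "{g. c g \<noteq> \<zero>} \<subseteq> S" using assms(4) by auto
  have "finsum G c {g. c g \<noteq> \<zero>} = finsum G c S"
    by (rule add.finprod_mono_neutral_cong_left) (use assms support in auto)
  then show ?thesis
    unfolding gdecomp_def using assms finite_subset[OF support] by auto
qed

locale graded_abelian_group = abelian_group G for G (structure) +
  fixes Gg :: "'g \<Rightarrow> 'a set"
  assumes direct_sum: "direct_sum_grading G Gg"
begin

lemma additive_subgroup_grading: "additive_subgroup (Gg g) G"
  using direct_sum unfolding direct_sum_grading_def by simp

lemma grading_subset_carrier: "Gg g \<subseteq> carrier G"
  using additive_subgroup.a_subset[OF additive_subgroup_grading] .

lemma zero_in_grading: "\<zero> \<in> Gg g"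
  using additive_subgroup.zero_closed[OF additive_subgroup_grading] .

lemma gcomp_unique:
  assumes "x \<in> carrier G" "gdecomp G Gg x c"
  shows "gcomp G Gg x = c"
proof -
  have "\<exists>!c. gdecomp G Gg x c" using direct_sum assms(1) unfolding direct_sum_grading_def by simp
  then show ?thesis unfolding gcomp_def using assms(2) by (metis the1_equality)
qed

lemma gdecomp_gcomp:
  assumes "x \<in> carrier G"
  shows "gdecomp G Gg x (gcomp G Gg x)"
proof -
  have "\<exists>!c. gdecomp G Gg x c" using direct_sum assms unfolding direct_sum_grading_def by simp
  then show ?thesis unfolding gcomp_def by (rule theI')
qed

lemma gcomp_in_grading: "x \<in> carrier G \<Longrightarrow> gcomp G Gg x g \<in> Gg g"
  using gdecomp_gcomp unfolding gdecomp_def by auto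

lemma gcomp_closed: "x \<in> carrier G \<Longrightarrow> gcomp G Gg x g \<in> carrier G"
  using gcomp_in_grading grading_subset_carrier by auto

lemma finite_gcomp_support: "x \<in> carrier G \<Longrightarrow> finite {g. gcomp G Gg x g \<noteq> \<zero>}"
  using gdecomp_gcomp unfolding gdecomp_def by auto

lemma finsum_gcomp:
  assumes "x \<in> carrier G" "finite S" "{g. gcomp G Gg x g \<noteq> \<zero>} \<subseteq> S"
  shows "finsum G (gcomp G Gg x) S = x"
proof -
  have "finsum G (gcomp G Gg x) {g. gcomp G Gg x g \<noteq> \<zero>} = finsum G (gcomp G Gg x) S"
    by (rule add.finprod_mono_neutral_cong_left) (use assms gcomp_closed in auto)
  then show ?thesis using gdecomp_gcomp[OF assms(1)] unfolding gdecomp_def by simp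
qed

lemma gcomp_homogeneous:
  assumes "a \<in> Gg h"
  shows "gcomp G Gg a = (\<lambda>k. if k = h then a else \<zero>)"
proof (rule gcomp_unique)
  show a: "a \<in> carrier G" using assms grading_subset_carrier by auto
  show "gdecomp G Gg a (\<lambda>k. if k = h then a else \<zero>)"
    by (rule gdecompI[where S = "{h}"]) (use assms a zero_in_grading in auto)
qed

lemma mem_additive_subgroup_if_gcomp:
  assumes "additive_subgroup H G" "x \<in> carrier G" "\<And>g. gcomp G Gg x g \<in> H"
  shows "x \<in> H"
proof -
  have "x = finsum G (gcomp G Gg x) {g. gcomp G Gg x g \<noteq> \<zero>}"
    using finsum_gcomp finite_gcomp_support assms(2) by simp
  also have "\<dots> \<in> H"
    using finsum_in_additive_subgroup assms finite_gcomp_support by blast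
  finally show ?thesis .
qed

lemma gcomp_add:
  assumes "x \<in> carrier G" "y \<in> carrier G"
  shows "gcomp G Gg (x \<oplus> y) g = gcomp G Gg x g \<oplus> gcomp G Gg y g"
proof -
  define S where "S = {g. gcomp G Gg x g \<noteq> \<zero>} \<union> {g. gcomp G Gg y g \<noteq> \<zero>}"
  have S: "finite S" unfolding S_def using finite_gcomp_support assms by simp
  have "gdecomp G Gg (x \<oplus> y) (\<lambda>g. gcomp G Gg x g \<oplus> gcomp G Gg y g)"
  proof (rule gdecompI[OF _ _ S])
    show "gcomp G Gg x g \<oplus> gcomp G Gg y g \<in> Gg g" for g
      using additive_subgroup.a_closed[OF additive_subgroup_grading] gcomp_in_grading assms by blast
    show "gcomp G Gg x g \<oplus> gcomp G Gg y g \<in> carrier G" for g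
      using gcomp_closed assms by simp
    show "gcomp G Gg x g \<oplus> gcomp G Gg y g = \<zero>" if "g \<notin> S" for g
      using that unfolding S_def by auto
    have "x \<oplus> y = finsum G (gcomp G Gg x) S \<oplus> finsum G (gcomp G Gg y) S"
      using finsum_gcomp[OF _ S] assms unfolding S_def by auto
    then show "x \<oplus> y = finsum G (\<lambda>g. gcomp G Gg x g \<oplus> gcomp G Gg y g) S"
      using gcomp_closed assms by (simp add: Pi_def)
  qed
  then show ?thesis using gcomp_unique assms by simp
qed

end

lemma (in abelian_group_hom) gcomp_hom_shift:
  assumes "direct_sum_grading G Gg" "direct_sum_grading H Hg" "bij \<tau>"
    and shift: "\<And>g y. y \<in> Gg g \<Longrightarrow> h y \<in> Hg (\<tau> g)"
    and x: "x \<in> carrier G"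
  shows "gcomp H Hg (h x) (\<tau> g) = h (gcomp G Gg x g)"
proof -
  interpret G: graded_abelian_group G Gg by unfold_locales fact
  interpret H: graded_abelian_group H Hg by unfold_locales fact
  define S where "S = {g. gcomp G Gg x g \<noteq> \<zero>\<^bsub>G\<^esub>}"
  have S: "finite S" unfolding S_def using G.finite_gcomp_support[OF x] .
  have inv: "\<tau> (inv_into UNIV \<tau> k) = k" "inv_into UNIV \<tau> (\<tau> g) = g" for k g
    using assms(3) by (simp_all add: bij_is_surj surj_f_inv_f bij_is_inj)
  have "gdecomp H Hg (h x) (\<lambda>k. h (gcomp G Gg x (inv_into UNIV \<tau> k)))"
  proof (rule H.gdecompI[where S = "\<tau> ` S"])
    show "h (gcomp G Gg x (inv_into UNIV \<tau> k)) \<in> Hg k" for k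
      using shift[OF G.gcomp_in_grading[OF x]] inv by metis
    show "h (gcomp G Gg x (inv_into UNIV \<tau> k)) \<in> carrier H" for k
      using G.gcomp_closed[OF x] by simp
    show "finite (\<tau> ` S)" using S by simp
    show "h (gcomp G Gg x (inv_into UNIV \<tau> k)) = \<zero>\<^bsub>H\<^esub>" if "k \<notin> \<tau> ` S" for k
      using that inv unfolding S_def by (metis (mono_tags) hom_zero image_eqI mem_Collect_eq)
    have "h x = h (finsum G (gcomp G Gg x) S)"
      using G.finsum_gcomp[OF x S] unfolding S_def by simp
    also have "\<dots> = finsum H (h \<circ> gcomp G Gg x) S"
      using hom_finsum[OF S] G.gcomp_closed[OF x] by simp
    also have "\<dots> = finsum H (\<lambda>k. h (gcomp G Gg x (inv_into UNIV \<tau> k))) (\<tau> ` S)"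
      using H.finsum_reindex[of "\<lambda>k. h (gcomp G Gg x (inv_into UNIV \<tau> k))" \<tau> S] inv
        G.gcomp_closed[OF x] inj_on_subset[OF bij_is_inj[OF assms(3)] subset_UNIV]
      by (simp add: comp_def Pi_def)
    finally show "h x = finsum H (\<lambda>k. h (gcomp G Gg x (inv_into UNIV \<tau> k))) (\<tau> ` S)" .
  qed
  then show ?thesis using H.gcomp_unique x inv by simp
qed

section \<open>Graded rings\<close>

lemma (in cring) cring_idealI:
  assumes "I \<subseteq> carrier R" "\<zero> \<in> I" "\<And>a b. a \<in> I \<Longrightarrow> b \<in> I \<Longrightarrow> a \<oplus> b \<in> I"
    "\<And>a. a \<in> I \<Longrightarrow> \<ominus> a \<in> I" "\<And>a x. a \<in> I \<Longrightarrow> x \<in> carrier R \<Longrightarrow> x \<otimes> a \<in> I"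
  shows "ideal I R"
proof (rule idealI)
  show "subgroup I (add_monoid R)"
    using assms by (intro add.subgroupI) (auto simp flip: a_inv_def)
  show "a \<otimes> x \<in> I" if "a \<in> I" "x \<in> carrier R" for a x
    using assms(1,5) that m_comm by force
qed (use assms ring_axioms in auto)

lemma (in ring) graded_ideal_subset_graded_radical:
  assumes "graded_ideal R Rg I"
  shows "I \<subseteq> graded_radical R Rg I"
proof
  fix x assume x: "x \<in> I"
  interpret ideal I R using assms unfolding graded_ideal_def by simp
  have "gcomp R Rg x g \<in> I" for g using assms x unfolding graded_ideal_def by simp
  then have "gcomp R Rg x g [^] (1::nat) \<in> I" for g using a_subset by auto
  then show "x \<in> graded_radical R Rg I"
    unfolding graded_radical_def using x a_subset zero_less_one by blast
qed

lemma (in ring) graded_qp_ideal_if_graded_prime: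
  assumes "graded_prime_ideal R Rg q"
  shows "graded_qp_ideal R Rg q"
  using assms graded_ideal_subset_graded_radical
  unfolding graded_prime_ideal_def graded_qp_ideal_def by blast

lemma (in ring) rcos_image_mem_iff:
  assumes "ideal I R" "ideal J R" "I \<subseteq> J" "x \<in> carrier R"
  shows "I +> x \<in> (+>) I ` J \<longleftrightarrow> x \<in> J"
proof
  interpret I: ideal I R by fact
  assume "I +> x \<in> (+>) I ` J"
  moreover have "x \<in> I +> x" using I.a_rcos_self[OF assms(4)] .
  ultimately show "x \<in> J" using ideal_incl_iff[OF assms(1,2)] assms(3) by blast
qed blast

lemma (in ring) rcos_image_inj:
  assumes "ideal I R" "ideal J R" "ideal J' R" "I \<subseteq> J" "I \<subseteq> J'" "(+>) I ` J = (+>) I ` J'"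
  shows "J = J'"
  using ideal_incl_iff[OF assms(1,2)] ideal_incl_iff[OF assms(1,3)] assms(4-6) by metis

definition graded_prime_hull :: "('a, 'c) ring_scheme \<Rightarrow> ('g \<Rightarrow> 'a set) \<Rightarrow> 'a set \<Rightarrow> 'a set" where
  "graded_prime_hull R Rg S = carrier R \<inter> \<Inter>{p. graded_prime_ideal R Rg p \<and> S \<subseteq> p}"

lemma mem_graded_prime_hull_iff:
  "x \<in> graded_prime_hull R Rg S \<longleftrightarrow> x \<in> carrier R \<and> (\<forall>p. graded_prime_ideal R Rg p \<and> S \<subseteq> p \<longrightarrow> x \<in> p)"
  unfolding graded_prime_hull_def by simp

locale gr_ring = cring R for R (structure) +
  fixes Rg :: "'g::group_add \<Rightarrow> 'a set"
  assumes graded_ring: "graded_ring R Rg"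

sublocale gr_ring \<subseteq> R: graded_abelian_group R Rg
  using graded_ring unfolding graded_ring_def by unfold_locales simp

context gr_ring
begin

lemma mult_homogeneous: "a \<in> Rg g \<Longrightarrow> b \<in> Rg h \<Longrightarrow> a \<otimes> b \<in> Rg (g + h)"
  using graded_ring unfolding graded_ring_def by blast

lemma homogeneous_closed: "a \<in> hom_elems Rg \<Longrightarrow> a \<in> carrier R"
  using R.grading_subset_carrier unfolding hom_elems_def by blast

lemma gcomp_mult_homogeneous:
  assumes a: "a \<in> Rg h" and x: "x \<in> carrier R"
  shows "gcomp R Rg (x \<otimes> a) (g + h) = gcomp R Rg x g \<otimes> a"
proof -
  have aC: "a \<in> carrier R" using a R.grading_subset_carrier by blast
  interpret abelian_group_hom R R "\<lambda>x. x \<otimes> a"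
    using aC by (intro abelian_group_homI_additive) (auto simp: l_distr is_abelian_group)
  show ?thesis
    using gcomp_hom_shift[OF R.direct_sum R.direct_sum bij_plus_right _ x] mult_homogeneous[OF _ a]
    by blast
qed

lemma one_homogeneous: "\<one> \<in> Rg 0"
proof -
  define e where "e = gcomp R Rg \<one>"
  define S where "S = {g. e g \<noteq> \<zero>}"
  have S: "finite S" unfolding S_def e_def using R.finite_gcomp_support by simp
  have eC: "e g \<in> carrier R" for g unfolding e_def using R.gcomp_closed by simp
  have one: "finsum R e S = \<one>" unfolding S_def e_def using R.finsum_gcomp R.finite_gcomp_support by simp
  have annihilates: "e g \<otimes> a = \<zero>" if "g \<noteq> 0" "a \<in> Rg h" for g a h
  proof -
    have "a \<in> carrier R" using that R.grading_subset_carrier by blast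
    then have "e g \<otimes> a = gcomp R Rg a (g + h)"
      using gcomp_mult_homogeneous[OF that(2) one_closed] unfolding e_def by simp
    also have "\<dots> = \<zero>"
      using R.gcomp_homogeneous[OF that(2)] that(1) by (metis add.left_neutral add_right_cancel)
    finally show ?thesis .
  qed
  have "e g = \<zero>" if "g \<noteq> 0" for g
  proof -
    have "e g = e g \<otimes> finsum R e S" using one eC by simp
    also have "\<dots> = finsum R (\<lambda>k. e g \<otimes> e k) S" using finsum_rdistr[OF S eC] eC by simp
    also have "\<dots> = finsum R (\<lambda>k. \<zero>) S"
      by (rule finsum_cong') (use annihilates[OF that] R.gcomp_in_grading[OF one_closed] in \<open>auto simp: e_def\<close>)
    also have "\<dots> = \<zero>" by simp
    finally show ?thesis .
  qed
  then have "finsum R e {0} = \<one>" using R.finsum_gcomp[of \<one> "{0}"] unfolding e_def by auto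
  then show ?thesis using R.gcomp_in_grading[of \<one> 0] eC unfolding e_def by simp
qed

lemma nat_pow_homogeneous:
  assumes "a \<in> hom_elems Rg" shows "a [^] (n::nat) \<in> hom_elems Rg"
proof (induct n)
  case 0
  then show ?case using one_homogeneous unfolding hom_elems_def by auto
next
  case (Suc n)
  then show ?case using assms unfolding hom_elems_def by (fastforce intro: mult_homogeneous)
qed

lemma graded_prime_nat_pow_mem:
  assumes p: "graded_prime_ideal R Rg p" and a: "a \<in> hom_elems Rg" and an: "a [^] (n::nat) \<in> p"
  shows "a \<in> p"
  using an
proof (induct n)
  case 0
  have "ideal p R" using p unfolding graded_prime_ideal_def graded_ideal_def by simp
  then show ?case using 0 p ideal.one_imp_carrier unfolding graded_prime_ideal_def by force
next
  case (Suc n)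
  then show ?case using p a nat_pow_homogeneous[OF a] unfolding graded_prime_ideal_def by auto
qed

lemma graded_radical_homogeneous_iff:
  assumes a: "a \<in> Rg d" and I: "ideal I R"
  shows "a \<in> graded_radical R Rg I \<longleftrightarrow> (\<exists>n::nat. n > 0 \<and> a [^] n \<in> I)"
proof -
  have "\<zero> [^] (1::nat) \<in> I" using additive_subgroup.zero_closed[OF ideal.axioms(1)[OF I]] by simp
  then show ?thesis
    using a R.grading_subset_carrier R.gcomp_homogeneous[OF a]
    unfolding graded_radical_def by (auto intro: zero_less_one)
qed

lemma graded_radical_mono_pow:
  assumes "\<And>x. x \<in> I \<Longrightarrow> \<exists>n::nat. n > 0 \<and> x [^] n \<in> J"
  shows "graded_radical R Rg I \<subseteq> graded_radical R Rg J"
proof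
  fix x assume x: "x \<in> graded_radical R Rg I"
  then have xC: "x \<in> carrier R" unfolding graded_radical_def by simp
  have "\<exists>m::nat. m > 0 \<and> gcomp R Rg x g [^] m \<in> J" for g
  proof -
    obtain k :: nat where "k > 0" "gcomp R Rg x g [^] k \<in> I"
      using x unfolding graded_radical_def by blast
    moreover obtain n :: nat where "n > 0" "(gcomp R Rg x g [^] k) [^] n \<in> J"
      using assms calculation(2) by blast
    ultimately have "k * n > 0" "gcomp R Rg x g [^] (k * n) \<in> J"
      using nat_pow_pow[OF R.gcomp_closed[OF xC]] by simp_all
    then show ?thesis by blast
  qed
  then show "x \<in> graded_radical R Rg J" unfolding graded_radical_def using xC by simp
qed

lemma graded_ideal_colon_homogeneous:
  assumes p: "graded_ideal R Rg p" and c: "c \<in> Rg d"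
  shows "graded_ideal R Rg {x \<in> carrier R. x \<otimes> c \<in> p}"
proof -
  interpret p: ideal p R using p unfolding graded_ideal_def by simp
  have cC: "c \<in> carrier R" using c R.grading_subset_carrier by blast
  have "ideal {x \<in> carrier R. x \<otimes> c \<in> p} R"
    by (rule cring_idealI)
      (use cC in \<open>auto simp: l_distr l_minus m_assoc intro: p.a_closed p.a_inv_closed p.I_l_closed\<close>)
  moreover have "gcomp R Rg x g \<in> {x \<in> carrier R. x \<otimes> c \<in> p}"
    if x: "x \<in> carrier R" "x \<otimes> c \<in> p" for x g
  proof -
    have "gcomp R Rg x g \<otimes> c = gcomp R Rg (x \<otimes> c) (g + d)"
      using gcomp_mult_homogeneous[OF c x(1)] by simp
    also have "\<dots> \<in> p" using p x(2) unfolding graded_ideal_def by blast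
    finally show ?thesis using R.gcomp_closed[OF x(1)] by simp
  qed
  ultimately show ?thesis unfolding graded_ideal_def by simp
qed

lemma graded_ideal_directed_Union:
  assumes "\<C> \<noteq> {}" "\<And>I. I \<in> \<C> \<Longrightarrow> graded_ideal R Rg I"
    and directed: "\<And>I J. I \<in> \<C> \<Longrightarrow> J \<in> \<C> \<Longrightarrow> \<exists>L\<in>\<C>. I \<subseteq> L \<and> J \<subseteq> L"
  shows "graded_ideal R Rg (\<Union>\<C>)"
proof -
  have ideal: "ideal I R" if "I \<in> \<C>" for I using assms(2)[OF that] unfolding graded_ideal_def by simp
  have "ideal (\<Union>\<C>) R"
  proof (rule cring_idealI)
    show "\<Union>\<C> \<subseteq> carrier R" using ideal.Icarr[OF ideal] by blast
    obtain I where "I \<in> \<C>" using assms(1) by blast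
    then show "\<zero> \<in> \<Union>\<C>" using additive_subgroup.zero_closed[OF ideal.axioms(1)[OF ideal]] by blast
    show "\<ominus> a \<in> \<Union>\<C>" if "a \<in> \<Union>\<C>" for a
      using that additive_subgroup.a_inv_closed[OF ideal.axioms(1)[OF ideal]] by blast
    show "x \<otimes> a \<in> \<Union>\<C>" if "a \<in> \<Union>\<C>" "x \<in> carrier R" for a x
      using that ideal.I_l_closed[OF ideal] by blast
    show "a \<oplus> b \<in> \<Union>\<C>" if ab: "a \<in> \<Union>\<C>" "b \<in> \<Union>\<C>" for a b
    proof -
      obtain I J where "I \<in> \<C>" "J \<in> \<C>" "a \<in> I" "b \<in> J" using ab by blast
      moreover obtain L where "L \<in> \<C>" "I \<subseteq> L" "J \<subseteq> L" using directed calculation(1,2) by blast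
      ultimately show ?thesis using additive_subgroup.a_closed[OF ideal.axioms(1)[OF ideal]] by blast
    qed
  qed
  moreover have "\<forall>x \<in> \<Union>\<C>. \<forall>g. gcomp R Rg x g \<in> \<Union>\<C>"
    using assms(2) unfolding graded_ideal_def by blast
  ultimately show ?thesis unfolding graded_ideal_def by simp
qed

lemma graded_prime_if_maximal_avoiding_powers:
  assumes p: "graded_ideal R Rg p" and r: "r \<in> hom_elems Rg" and avoid: "\<And>k::nat. r [^] k \<notin> p"
    and maximal: "\<And>I. graded_ideal R Rg I \<Longrightarrow> p \<subseteq> I \<Longrightarrow> \<forall>k::nat. r [^] k \<notin> I \<Longrightarrow> I = p"
  shows "graded_prime_ideal R Rg p"
proof -
  interpret p: ideal p R using p unfolding graded_ideal_def by simp
  have rC: "r \<in> carrier R" using homogeneous_closed[OF r] .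
  have enlarge: "\<exists>k::nat. r [^] k \<otimes> c \<in> p"
    if c: "c \<in> hom_elems Rg" and y: "y \<in> carrier R" "y \<notin> p" "y \<otimes> c \<in> p" for c y
  proof -
    let ?P = "{x \<in> carrier R. x \<otimes> c \<in> p}"
    have cC: "c \<in> carrier R" using homogeneous_closed[OF c] .
    have P: "graded_ideal R Rg ?P"
      using graded_ideal_colon_homogeneous[OF p] c unfolding hom_elems_def by blast
    have pP: "p \<subseteq> ?P"
    proof
      fix x assume "x \<in> p"
      then show "x \<in> ?P" using p.I_r_closed[OF _ cC] p.Icarr by simp
    qed
    have "?P \<noteq> p" using y by blast
    then have "\<not> (\<forall>k::nat. r [^] k \<notin> ?P)" using maximal[OF P pP] by blast
    then show ?thesis by blast
  qed
  have "a \<in> p \<or> b \<in> p" if a: "a \<in> hom_elems Rg" and b: "b \<in> hom_elems Rg" and ab: "a \<otimes> b \<in> p" for a b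
  proof (rule ccontr)
    assume "\<not> (a \<in> p \<or> b \<in> p)"
    then have "a \<notin> p" "b \<notin> p" by auto
    have aC: "a \<in> carrier R" and bC: "b \<in> carrier R" using homogeneous_closed a b by auto
    obtain k :: nat where "r [^] k \<otimes> b \<in> p" using enlarge[OF b aC \<open>a \<notin> p\<close> ab] by blast
    then have "b \<otimes> r [^] k \<in> p" using m_comm[OF nat_pow_closed[OF rC] bC] by simp
    then obtain l :: nat where "r [^] l \<otimes> r [^] k \<in> p"
      using enlarge[OF nat_pow_homogeneous[OF r] bC \<open>b \<notin> p\<close>] by blast
    then have "r [^] (l + k) \<in> p" using nat_pow_mult[OF rC] by simp
    then show False using avoid by blast
  qed
  moreover have "p \<noteq> carrier R" using avoid[of 0] one_closed by (metis nat_pow_0)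
  ultimately show ?thesis unfolding graded_prime_ideal_def using p by blast
qed

lemma graded_ideal_chain_Union:
  assumes chain: "subset.chain \<A> \<C>" and "\<C> \<noteq> {}" "\<And>I. I \<in> \<C> \<Longrightarrow> graded_ideal R Rg I"
  shows "graded_ideal R Rg (\<Union>\<C>)"
proof (rule graded_ideal_directed_Union[OF assms(2,3)])
  fix I I' assume II: "I \<in> \<C>" "I' \<in> \<C>"
  then have "I \<subseteq> I' \<or> I' \<subseteq> I" using chain unfolding subset_chain_def by simp
  then show "\<exists>L\<in>\<C>. I \<subseteq> L \<and> I' \<subseteq> L" using II by (metis order_refl)
qed

lemma exists_graded_prime_avoiding_powers:
  assumes J: "graded_ideal R Rg J" and r: "r \<in> hom_elems Rg" and avoid: "\<And>k::nat. r [^] k \<notin> J"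
  shows "\<exists>p. graded_prime_ideal R Rg p \<and> J \<subseteq> p \<and> r \<notin> p"
proof -
  define \<A> where "\<A> = {I. graded_ideal R Rg I \<and> J \<subseteq> I \<and> (\<forall>k::nat. r [^] k \<notin> I)}"
  have "\<exists>p\<in>\<A>. \<forall>I\<in>\<A>. p \<subseteq> I \<longrightarrow> I = p"
  proof (rule subset_Zorn)
    fix \<C> assume chain: "subset.chain \<A> \<C>"
    show "\<exists>U\<in>\<A>. \<forall>I\<in>\<C>. I \<subseteq> U"
    proof (cases "\<C> = {}")
      case True
      have "J \<in> \<A>" unfolding \<A>_def using J avoid by simp
      then show ?thesis using True by blast
    next
      case False
      have "\<C> \<subseteq> \<A>" using chain by (simp add: subset_chain_def)
      have C: "graded_ideal R Rg I \<and> J \<subseteq> I \<and> (\<forall>k::nat. r [^] k \<notin> I)" if "I \<in> \<C>" for I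
        using subsetD[OF \<open>\<C> \<subseteq> \<A>\<close> that] unfolding \<A>_def by (rule CollectD)
      have "graded_ideal R Rg (\<Union>\<C>)" using graded_ideal_chain_Union[OF chain False] C by blast
      moreover have "J \<subseteq> \<Union>\<C>" using False C by blast
      moreover have "\<forall>k::nat. r [^] k \<notin> \<Union>\<C>" using C by blast
      ultimately have "\<Union>\<C> \<in> \<A>" unfolding \<A>_def by (intro CollectI conjI)
      then show ?thesis by blast
    qed
  qed
  then obtain p where "p \<in> \<A>" and maximal: "\<And>I. I \<in> \<A> \<Longrightarrow> p \<subseteq> I \<Longrightarrow> I = p" by blast
  then have p: "graded_ideal R Rg p" "J \<subseteq> p" "\<And>k::nat. r [^] k \<notin> p"
    unfolding \<A>_def by (blast dest: CollectD)+
  have "I = p" if "graded_ideal R Rg I" "p \<subseteq> I" "\<forall>k::nat. r [^] k \<notin> I" for I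
    using maximal[of I] that p(2) unfolding \<A>_def by blast
  then have "graded_prime_ideal R Rg p"
    using graded_prime_if_maximal_avoiding_powers[OF p(1) r p(3)] by blast
  moreover have "r \<notin> p" using p(3)[of 1] homogeneous_closed[OF r] by simp
  ultimately show ?thesis using p(2) by blast
qed

lemma graded_prime_hull_graded_ideal: "graded_ideal R Rg (graded_prime_hull R Rg S)"
proof -
  let ?P = "{p. graded_prime_ideal R Rg p \<and> S \<subseteq> p}"
  have "graded_prime_hull R Rg S = \<Inter>(insert (carrier R) ?P)"
    unfolding graded_prime_hull_def by simp
  moreover have "ideal (\<Inter>(insert (carrier R) ?P)) R"
    using oneideal unfolding graded_prime_ideal_def graded_ideal_def by (intro i_Intersect) auto
  moreover have "gcomp R Rg x g \<in> graded_prime_hull R Rg S" if "x \<in> graded_prime_hull R Rg S" for x g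
    using that R.gcomp_closed
    unfolding mem_graded_prime_hull_iff graded_prime_ideal_def graded_ideal_def by simp
  ultimately show ?thesis unfolding graded_ideal_def by simp
qed

lemma graded_prime_hull_mono: "S \<subseteq> T \<Longrightarrow> graded_prime_hull R Rg S \<subseteq> graded_prime_hull R Rg T"
  unfolding subset_iff mem_graded_prime_hull_iff by fast

lemma subset_graded_prime_hull: "S \<subseteq> carrier R \<Longrightarrow> S \<subseteq> graded_prime_hull R Rg S"
  unfolding subset_iff mem_graded_prime_hull_iff by fast

lemma graded_prime_hull_subset_prime:
  "graded_prime_ideal R Rg p \<Longrightarrow> S \<subseteq> p \<Longrightarrow> graded_prime_hull R Rg S \<subseteq> p"
  unfolding subset_iff mem_graded_prime_hull_iff by fast

lemma graded_prime_hull_prime: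
  assumes "graded_prime_ideal R Rg p"
  shows "graded_prime_hull R Rg p = p"
proof -
  have "p \<subseteq> carrier R"
    using assms ideal.Icarr unfolding graded_prime_ideal_def graded_ideal_def by fast
  then show ?thesis
    using subset_graded_prime_hull graded_prime_hull_subset_prime[OF assms] by (simp add: subset_antisym)
qed

lemma graded_prime_hull_subset_iff:
  assumes "S \<subseteq> carrier R"
  shows "graded_prime_hull R Rg S \<subseteq> graded_prime_hull R Rg T \<longleftrightarrow> S \<subseteq> graded_prime_hull R Rg T"
proof
  assume "graded_prime_hull R Rg S \<subseteq> graded_prime_hull R Rg T"
  then show "S \<subseteq> graded_prime_hull R Rg T"
    using subset_graded_prime_hull[OF assms] by (rule order_trans[rotated])
next
  assume "S \<subseteq> graded_prime_hull R Rg T"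
  then have "S \<subseteq> p" if "graded_prime_ideal R Rg p" "T \<subseteq> p" for p
    using graded_prime_hull_subset_prime[OF that] by (rule order_trans)
  then show "graded_prime_hull R Rg S \<subseteq> graded_prime_hull R Rg T"
    unfolding subset_iff mem_graded_prime_hull_iff by fast
qed

lemma graded_prime_hull_nat_pow:
  assumes "r \<in> hom_elems Rg" "r [^] (n::nat) \<in> graded_prime_hull R Rg S"
  shows "r \<in> graded_prime_hull R Rg S"
  using assms homogeneous_closed graded_prime_nat_pow_mem unfolding mem_graded_prime_hull_iff by fast

lemma graded_radical_subset_graded_prime_hull:
  "graded_radical R Rg I \<subseteq> graded_prime_hull R Rg I"
proof
  fix x assume x: "x \<in> graded_radical R Rg I"
  have xC: "x \<in> carrier R" using x unfolding graded_radical_def by simp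
  have "x \<in> p" if p: "graded_prime_ideal R Rg p" "I \<subseteq> p" for p
  proof (rule R.mem_additive_subgroup_if_gcomp[OF _ xC])
    show "additive_subgroup p R"
      using p(1) ideal.axioms(1) unfolding graded_prime_ideal_def graded_ideal_def by fast
    fix g
    obtain n :: nat where "gcomp R Rg x g [^] n \<in> I" using x unfolding graded_radical_def by blast
    moreover have "gcomp R Rg x g \<in> hom_elems Rg"
      using R.gcomp_in_grading[OF xC] unfolding hom_elems_def by blast
    ultimately show "gcomp R Rg x g \<in> p" using graded_prime_nat_pow_mem[OF p(1)] p(2) by blast
  qed
  then show "x \<in> graded_prime_hull R Rg I" unfolding mem_graded_prime_hull_iff using xC by simp
qed

lemma graded_prime_hull_subset_graded_radical:
  assumes I: "graded_ideal R Rg I"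
  shows "graded_prime_hull R Rg I \<subseteq> graded_radical R Rg I"
proof
  fix x assume x: "x \<in> graded_prime_hull R Rg I"
  have xC: "x \<in> carrier R" using x unfolding mem_graded_prime_hull_iff by simp
  have "\<exists>n::nat. n > 0 \<and> gcomp R Rg x g [^] n \<in> I" for g
  proof -
    let ?y = "gcomp R Rg x g"
    have y: "?y \<in> hom_elems Rg" using R.gcomp_in_grading[OF xC] unfolding hom_elems_def by blast
    have "?y \<in> graded_prime_hull R Rg I"
      using graded_prime_hull_graded_ideal x unfolding graded_ideal_def by simp
    then obtain k :: nat where "?y [^] k \<in> I"
      using exists_graded_prime_avoiding_powers[OF I y] unfolding mem_graded_prime_hull_iff by blast
    moreover have "ideal I R" using I unfolding graded_ideal_def by simp
    ultimately have "?y [^] Suc k \<in> I"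
      using ideal.I_r_closed homogeneous_closed[OF y] by simp
    then show ?thesis by blast
  qed
  then show "x \<in> graded_radical R Rg I" unfolding graded_radical_def using xC by simp
qed

lemma graded_radical_eq_graded_prime_hull:
  "graded_ideal R Rg I \<Longrightarrow> graded_radical R Rg I = graded_prime_hull R Rg I"
  using graded_radical_subset_graded_prime_hull graded_prime_hull_subset_graded_radical
  by (rule subset_antisym)

lemma graded_ideal_Union_finite_subfamily_hulls:
  "graded_ideal R Rg (\<Union>B\<in>{B. B \<subseteq> A \<and> finite B}. graded_prime_hull R Rg (S \<union> (\<Union>i\<in>B. J i)))"
proof (rule graded_ideal_directed_Union)
  let ?H = "\<lambda>B. graded_prime_hull R Rg (S \<union> (\<Union>i\<in>B. J i))"
  show "?H ` {B. B \<subseteq> A \<and> finite B} \<noteq> {}" by blast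
  show "graded_ideal R Rg I" if "I \<in> ?H ` {B. B \<subseteq> A \<and> finite B}" for I
    using that graded_prime_hull_graded_ideal by (elim imageE) simp
  show "\<exists>L \<in> ?H ` {B. B \<subseteq> A \<and> finite B}. I \<subseteq> L \<and> I' \<subseteq> L"
    if II: "I \<in> ?H ` {B. B \<subseteq> A \<and> finite B}" "I' \<in> ?H ` {B. B \<subseteq> A \<and> finite B}" for I I'
  proof -
    obtain B where B: "B \<subseteq> A" "finite B" "I = ?H B" using II(1) by auto
    obtain B' where B': "B' \<subseteq> A" "finite B'" "I' = ?H B'" using II(2) by auto
    have "?H (B \<union> B') \<in> ?H ` {B. B \<subseteq> A \<and> finite B}" by (rule imageI) (use B B' in simp)
    moreover have "I \<subseteq> ?H (B \<union> B')" "I' \<subseteq> ?H (B \<union> B')"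
      unfolding B(3) B'(3) by (intro graded_prime_hull_mono; blast)+
    ultimately show ?thesis by blast
  qed
qed

lemma graded_prime_hull_finite_subfamily:
  assumes r: "r \<in> hom_elems Rg" and S: "S \<subseteq> carrier R" and J: "\<And>i. i \<in> A \<Longrightarrow> J i \<subseteq> carrier R"
    and hull: "r \<in> graded_prime_hull R Rg (S \<union> (\<Union>i\<in>A. J i))"
  shows "\<exists>B\<subseteq>A. finite B \<and> r \<in> graded_prime_hull R Rg (S \<union> (\<Union>i\<in>B. J i))"
proof (rule ccontr)
  assume none: "\<not> ?thesis"
  define H where "H B = graded_prime_hull R Rg (S \<union> (\<Union>i\<in>B. J i))" for B
  have "graded_ideal R Rg (\<Union>B\<in>{B. B \<subseteq> A \<and> finite B}. H B)"
    unfolding H_def by (rule graded_ideal_Union_finite_subfamily_hulls)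
  moreover have "r [^] k \<notin> (\<Union>B\<in>{B. B \<subseteq> A \<and> finite B}. H B)" for k :: nat
  proof
    assume "r [^] k \<in> (\<Union>B\<in>{B. B \<subseteq> A \<and> finite B}. H B)"
    then obtain B where "B \<subseteq> A" "finite B" "r [^] k \<in> H B" by auto
    then show False using none graded_prime_hull_nat_pow[OF r] unfolding H_def by meson
  qed
  ultimately obtain p where p: "graded_prime_ideal R Rg p" "r \<notin> p"
    and "(\<Union>B\<in>{B. B \<subseteq> A \<and> finite B}. H B) \<subseteq> p"
    using exists_graded_prime_avoiding_powers[OF _ r] by blast
  then have H_p: "H B \<subseteq> p" if "B \<subseteq> A" "finite B" for B
    using that unfolding UN_subset_iff by simp
  have "S \<union> (\<Union>i\<in>A. J i) \<subseteq> p"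
  proof (intro Un_least UN_least)
    show "S \<subseteq> p" using H_p[of "{}"] subset_graded_prime_hull[OF S] unfolding H_def by simp
    show "J i \<subseteq> p" if "i \<in> A" for i
    proof -
      have "S \<union> J i \<subseteq> H {i}"
        unfolding H_def using subset_graded_prime_hull[of "S \<union> J i"] S J[OF that] by simp
      then show ?thesis using order_trans[OF _ H_p[of "{i}"]] that by simp
    qed
  qed
  then have "r \<in> p" using hull graded_prime_hull_subset_prime[OF p(1)] by (meson subsetD)
  then show False using p(2) by contradiction
qed

lemma gdecomp_quotient:
  assumes I: "graded_ideal R Rg I" and a: "a \<in> carrier R"
  shows "gdecomp (R Quot I) (\<lambda>g. (+>) I ` Rg g) (I +> a) (\<lambda>g. I +> gcomp R Rg a g)"
proof -
  interpret I: ideal I R using I unfolding graded_ideal_def by simp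
  interpret \<pi>: ring_hom_cring R "R Quot I" "(+>) I" using I.rcos_ring_hom_cring[OF is_cring] .
  define S where "S = {g. gcomp R Rg a g \<noteq> \<zero>}"
  have S: "finite S" unfolding S_def using R.finite_gcomp_support[OF a] .
  show ?thesis
  proof (rule \<pi>.S.gdecompI[OF _ _ S])
    show "I +> gcomp R Rg a g \<in> (+>) I ` Rg g" for g using R.gcomp_in_grading[OF a] by blast
    show "I +> gcomp R Rg a g \<in> carrier (R Quot I)" for g using R.gcomp_closed[OF a] by simp
    show "I +> gcomp R Rg a g = \<zero>\<^bsub>R Quot I\<^esub>" if "g \<notin> S" for g
      using that unfolding S_def by simp
    have "I +> a = I +> finsum R (gcomp R Rg a) S"
      using R.finsum_gcomp[OF a S] unfolding S_def by simp
    also have "\<dots> = finsum (R Quot I) (\<lambda>g. I +> gcomp R Rg a g) S"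
      using \<pi>.hom_finsum[of "gcomp R Rg a" S] R.gcomp_closed[OF a] by (simp add: comp_def)
    finally show "I +> a = finsum (R Quot I) (\<lambda>g. I +> gcomp R Rg a g) S" .
  qed
qed

lemma gdecomp_quotient_unique:
  assumes I: "graded_ideal R Rg I" and a: "a \<in> carrier R"
    and c: "gdecomp (R Quot I) (\<lambda>g. (+>) I ` Rg g) (I +> a) c"
  shows "c = (\<lambda>g. I +> gcomp R Rg a g)"
proof -
  interpret I: ideal I R using I unfolding graded_ideal_def by simp
  interpret \<pi>: ring_hom_cring R "R Quot I" "(+>) I" using I.rcos_ring_hom_cring[OF is_cring] .
  define S where "S = {g. c g \<noteq> \<zero>\<^bsub>R Quot I\<^esub>}"
  have S: "finite S" using c unfolding gdecomp_def S_def by (elim conjE)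
  have "\<forall>g. \<exists>x. x \<in> Rg g \<and> c g = I +> x"
    using conjunct1[OF c[unfolded gdecomp_def]] by (simp add: image_iff Bex_def)
  then obtain b where "\<forall>g. b g \<in> Rg g \<and> c g = I +> b g" by (metis choice)
  then have b: "b g \<in> Rg g" "c g = I +> b g" for g by simp_all
  define d where "d g = (if g \<in> S then b g else \<zero>)" for g
  have d: "d g \<in> Rg g" "c g = I +> d g" for g
    using b R.zero_in_grading unfolding d_def S_def by auto
  have dC: "d g \<in> carrier R" for g using d(1) R.grading_subset_carrier by blast
  define y where "y = finsum R d S"
  have y: "y \<in> carrier R" unfolding y_def using dC by simp
  have "gdecomp R Rg y d"
    by (rule gdecompI[OF d(1) dC S _ y_def]) (simp add: d_def)
  then have gcomp_y: "gcomp R Rg y = d" using R.gcomp_unique[OF y] by simp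
  have "I +> a = finsum (R Quot I) c S" using c unfolding gdecomp_def S_def by (elim conjE)
  also have "\<dots> = finsum (R Quot I) (\<lambda>g. I +> d g) S" using ext[of c, OF d(2)] by simp
  also have "\<dots> = I +> y" unfolding y_def using \<pi>.hom_finsum[of d S] dC by (simp add: comp_def)
  finally have "a \<in> I +> y" using I.a_rcos_self[OF a] by simp
  then obtain z where z: "z \<in> I" "a = z \<oplus> y" unfolding a_r_coset_def' by blast
  have zC: "z \<in> carrier R" using z(1) I.Icarr by simp
  have "I +> gcomp R Rg a g = c g" for g
  proof -
    have "gcomp R Rg z g \<in> I" using I z(1) unfolding graded_ideal_def by simp
    then have "I +> gcomp R Rg z g = I" using I.a_rcos_const by simp
    then have "I +> (gcomp R Rg z g \<oplus> d g) = I +> d g"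
      using a_coset_add_assoc[OF I.a_subset R.gcomp_closed[OF zC, of g] dC[of g]] by simp
    then show ?thesis using R.gcomp_add[OF zC y] gcomp_y z(2) d(2) by simp
  qed
  then show ?thesis by auto
qed

lemma gcomp_quotient:
  assumes "graded_ideal R Rg I" "a \<in> carrier R"
  shows "gcomp (R Quot I) (\<lambda>g. (+>) I ` Rg g) (I +> a) = (\<lambda>g. I +> gcomp R Rg a g)"
  unfolding gcomp_def[of "R Quot I"]
  by (rule the_equality[where P = "gdecomp (R Quot I) (\<lambda>g. (+>) I ` Rg g) (I +> a)",
        OF gdecomp_quotient[OF assms] gdecomp_quotient_unique[OF assms]])

lemma graded_prime_ideal_quotient_image:
  assumes I: "graded_ideal R Rg I" and p: "graded_prime_ideal R Rg p" and Ip: "I \<subseteq> p"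
  shows "graded_prime_ideal (R Quot I) (\<lambda>g. (+>) I ` Rg g) ((+>) I ` p)"
proof -
  interpret I: ideal I R using I unfolding graded_ideal_def by simp
  interpret \<pi>: ring_hom_cring R "R Quot I" "(+>) I" using I.rcos_ring_hom_cring[OF is_cring] .
  have pI: "ideal p R" using p unfolding graded_prime_ideal_def graded_ideal_def by simp
  have mem: "I +> x \<in> (+>) I ` p \<longleftrightarrow> x \<in> p" if "x \<in> carrier R" for x
    using rcos_image_mem_iff[OF I.is_ideal pI Ip that] .
  have "ideal ((+>) I ` p) (R Quot I)" using ring_ideal_imp_quot_ideal[OF I.is_ideal pI] .
  moreover have "gcomp (R Quot I) (\<lambda>g. (+>) I ` Rg g) x g \<in> (+>) I ` p" if x: "x \<in> (+>) I ` p" for x g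
  proof -
    obtain a where a: "a \<in> p" "x = I +> a" using x by (elim imageE)
    then have "gcomp R Rg a g \<in> p" using p unfolding graded_prime_ideal_def graded_ideal_def by simp
    then show ?thesis using a gcomp_quotient[OF I ideal.Icarr[OF pI a(1)]] by simp
  qed
  moreover have "(+>) I ` p \<noteq> carrier (R Quot I)"
  proof -
    have "\<one> \<notin> p" using p ideal.one_imp_carrier[OF pI] unfolding graded_prime_ideal_def by blast
    then show ?thesis using mem[OF one_closed] \<pi>.hom_closed[OF one_closed] by blast
  qed
  moreover have "a \<in> (+>) I ` p \<or> b \<in> (+>) I ` p"
    if hom: "a \<in> hom_elems (\<lambda>g. (+>) I ` Rg g)" "b \<in> hom_elems (\<lambda>g. (+>) I ` Rg g)"
      and ab: "a \<otimes>\<^bsub>R Quot I\<^esub> b \<in> (+>) I ` p" for a b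
  proof -
    obtain a' b' where a': "a' \<in> hom_elems Rg" "a = I +> a'" and b': "b' \<in> hom_elems Rg" "b = I +> b'"
      using hom unfolding hom_elems_def by blast
    have "I +> (a' \<otimes> b') \<in> (+>) I ` p" using ab a' b' homogeneous_closed by simp
    then have "a' \<otimes> b' \<in> p"
      by (rule mem[OF m_closed[OF homogeneous_closed[OF a'(1)] homogeneous_closed[OF b'(1)]], THEN iffD1])
    then have "a' \<in> p \<or> b' \<in> p" using p a'(1) b'(1) unfolding graded_prime_ideal_def by blast
    then show ?thesis using a'(2) b'(2) by blast
  qed
  ultimately show ?thesis unfolding graded_prime_ideal_def graded_ideal_def by blast
qed

end

section \<open>Graded modules\<close>

locale gr_module = module R M
  for R :: "('a, 'c) ring_scheme" (structure) and M :: "('a, 'b) module" (structure) +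
  fixes Rg :: "'g::group_add \<Rightarrow> 'a set" and Mg :: "'g \<Rightarrow> 'b set"
  assumes graded_module: "graded_module R Rg M Mg"

sublocale gr_module \<subseteq> gr_ring R Rg
  using graded_module unfolding graded_module_def by unfold_locales simp

sublocale gr_module \<subseteq> M: graded_abelian_group M Mg
  using graded_module unfolding graded_module_def by unfold_locales simp

context gr_module
begin

lemma smult_homogeneous: "a \<in> Rg g \<Longrightarrow> m \<in> Mg h \<Longrightarrow> a \<odot>\<^bsub>M\<^esub> m \<in> Mg (g + h)"
  using graded_module unfolding graded_module_def by blast

lemma gcomp_smult_homogeneous_vector:
  assumes m: "m \<in> Mg h" and x: "x \<in> carrier R"
  shows "gcomp M Mg (x \<odot>\<^bsub>M\<^esub> m) (g + h) = gcomp R Rg x g \<odot>\<^bsub>M\<^esub> m"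
proof -
  have mC: "m \<in> carrier M" using m M.grading_subset_carrier by blast
  interpret abelian_group_hom R M "\<lambda>x. x \<odot>\<^bsub>M\<^esub> m"
    using mC by (intro abelian_group_homI_additive) (auto simp: smult_l_distr is_abelian_group M.abelian_group_axioms)
  show ?thesis
    using gcomp_hom_shift[OF R.direct_sum M.direct_sum bij_plus_right _ x] smult_homogeneous[OF _ m]
    by blast
qed

lemma gcomp_smult_homogeneous_scalar:
  assumes r: "r \<in> Rg d" and m: "m \<in> carrier M"
  shows "gcomp M Mg (r \<odot>\<^bsub>M\<^esub> m) (d + g) = r \<odot>\<^bsub>M\<^esub> gcomp M Mg m g"
proof -
  have rC: "r \<in> carrier R" using r R.grading_subset_carrier by blast
  interpret abelian_group_hom M M "\<lambda>m. r \<odot>\<^bsub>M\<^esub> m"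
    using rC by (intro abelian_group_homI_additive) (auto simp: smult_r_distr M.abelian_group_axioms)
  show ?thesis
    using gcomp_hom_shift[OF M.direct_sum M.direct_sum bij_plus _ m] smult_homogeneous[OF r]
    by blast
qed

lemma colon_ideal:
  assumes K: "submodule K R M"
  shows "ideal (colon R M K) R"
proof -
  interpret K: additive_subgroup K M by (rule additive_subgroupI[OF submodule.axioms(1)[OF K]])
  show ?thesis
    unfolding colon_def
    by (rule cring_idealI) (auto simp: smult_l_distr smult_l_minus smult_assoc1 submodule.smult_closed[OF K])
qed

lemma colon_graded_ideal:
  assumes K: "graded_submodule R M Mg K"
  shows "graded_ideal R Rg (colon R M K)"
proof -
  have Ks: "submodule K R M" using K unfolding graded_submodule_def by simp
  interpret K: additive_subgroup K M by (rule additive_subgroupI[OF submodule.axioms(1)[OF Ks]])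
  have "gcomp R Rg x g \<in> colon R M K" if x: "x \<in> colon R M K" for x g
  proof -
    have xC: "x \<in> carrier R" using x unfolding colon_def by simp
    have "gcomp R Rg x g \<odot>\<^bsub>M\<^esub> m \<in> K" if m: "m \<in> carrier M" for m
    proof -
      define S where "S = {h. gcomp M Mg m h \<noteq> \<zero>\<^bsub>M\<^esub>}"
      have S: "finite S" unfolding S_def using M.finite_gcomp_support[OF m] .
      have "gcomp R Rg x g \<odot>\<^bsub>M\<^esub> m = gcomp R Rg x g \<odot>\<^bsub>M\<^esub> finsum M (gcomp M Mg m) S"
        using M.finsum_gcomp[OF m S] unfolding S_def by simp
      also have "\<dots> = finsum M (\<lambda>h. gcomp R Rg x g \<odot>\<^bsub>M\<^esub> gcomp M Mg m h) S"
        using finsum_smult_ldistr[OF S R.gcomp_closed[OF xC]] M.gcomp_closed[OF m] by simp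
      also have "\<dots> \<in> K"
      proof (rule M.finsum_in_additive_subgroup[OF K.additive_subgroup_axioms S])
        fix h
        have mh: "gcomp M Mg m h \<in> Mg h" using M.gcomp_in_grading[OF m] .
        then have "x \<odot>\<^bsub>M\<^esub> gcomp M Mg m h \<in> K"
          using x M.grading_subset_carrier unfolding colon_def by blast
        then have "gcomp M Mg (x \<odot>\<^bsub>M\<^esub> gcomp M Mg m h) (g + h) \<in> K"
          using K unfolding graded_submodule_def by simp
        then show "gcomp R Rg x g \<odot>\<^bsub>M\<^esub> gcomp M Mg m h \<in> K"
          using gcomp_smult_homogeneous_vector[OF mh xC] by simp
      qed
      finally show ?thesis .
    qed
    then show ?thesis unfolding colon_def using R.gcomp_closed[OF xC] by simp
  qed
  then show ?thesis unfolding graded_ideal_def using colon_ideal[OF Ks] by simp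
qed

lemma Ann_subset_colon: "submodule K R M \<Longrightarrow> Ann R M \<subseteq> colon R M K"
  unfolding Ann_def colon_def using submodule.axioms(1) subgroup.one_closed by fastforce

lemma graded_ideal_Ann: "graded_ideal R Rg (Ann R M)"
proof -
  have "submodule {\<zero>\<^bsub>M\<^esub>} R M" by (rule submoduleI) auto
  moreover have "gcomp M Mg \<zero>\<^bsub>M\<^esub> g = \<zero>\<^bsub>M\<^esub>" for g
    using M.gcomp_homogeneous[OF M.zero_in_grading] by simp
  ultimately show ?thesis
    unfolding Ann_def by (intro colon_graded_ideal) (simp add: graded_submodule_def)
qed

lemma graded_submodule_scal_sub:
  assumes r: "r \<in> Rg d"
  shows "graded_submodule R M Mg (scal_sub M r)"
proof -
  have rC: "r \<in> carrier R" using r R.grading_subset_carrier by blast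
  have "submodule (scal_sub M r) R M"
  proof (rule submoduleI)
    show "scal_sub M r \<subseteq> carrier M" unfolding scal_sub_def using rC by auto
    show "\<zero>\<^bsub>M\<^esub> \<in> scal_sub M r" unfolding scal_sub_def using rC by (auto intro!: exI[of _ "\<zero>\<^bsub>M\<^esub>"])
    show "\<ominus>\<^bsub>M\<^esub> a \<in> scal_sub M r" if "a \<in> scal_sub M r" for a
      using that rC unfolding scal_sub_def by (auto simp: smult_r_minus[symmetric])
    show "a \<oplus>\<^bsub>M\<^esub> b \<in> scal_sub M r" if "a \<in> scal_sub M r" "b \<in> scal_sub M r" for a b
      using that rC unfolding scal_sub_def by (auto simp: smult_r_distr[symmetric])
    show "c \<odot>\<^bsub>M\<^esub> x \<in> scal_sub M r" if c: "c \<in> carrier R" and x: "x \<in> scal_sub M r" for c x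
    proof -
      obtain m where m: "m \<in> carrier M" "x = r \<odot>\<^bsub>M\<^esub> m" using x unfolding scal_sub_def by blast
      then have "c \<odot>\<^bsub>M\<^esub> x = r \<odot>\<^bsub>M\<^esub> (c \<odot>\<^bsub>M\<^esub> m)"
        using c rC by (simp add: smult_assoc1[symmetric] m_comm)
      then show ?thesis unfolding scal_sub_def using m(1) c by blast
    qed
  qed
  moreover have "gcomp M Mg x k \<in> scal_sub M r" if x: "x \<in> scal_sub M r" for x k
  proof -
    obtain m where m: "m \<in> carrier M" "x = r \<odot>\<^bsub>M\<^esub> m" using x unfolding scal_sub_def by blast
    then have "gcomp M Mg x k = r \<odot>\<^bsub>M\<^esub> gcomp M Mg m (- d + k)"
      using gcomp_smult_homogeneous_scalar[OF r m(1), of "- d + k"] by simp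
    then show ?thesis unfolding scal_sub_def using M.gcomp_closed[OF m(1)] by blast
  qed
  ultimately show ?thesis unfolding graded_submodule_def by blast
qed

lemma colon_scal_sub_nat_pow:
  assumes s: "s \<in> colon R M (scal_sub M r)" and r: "r \<in> carrier R"
  shows "s [^] (n::nat) \<in> colon R M (scal_sub M (r [^] n))"
proof (induct n)
  case 0
  show ?case unfolding colon_def scal_sub_def by (auto, metis smult_one)
next
  case (Suc n)
  have sC: "s \<in> carrier R" using s unfolding colon_def by simp
  have "s [^] Suc n \<odot>\<^bsub>M\<^esub> m \<in> scal_sub M (r [^] Suc n)" if m: "m \<in> carrier M" for m
  proof -
    obtain m1 where m1: "m1 \<in> carrier M" "s \<odot>\<^bsub>M\<^esub> m = r \<odot>\<^bsub>M\<^esub> m1"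
      using s m unfolding colon_def scal_sub_def by blast
    obtain m2 where m2: "m2 \<in> carrier M" "s [^] n \<odot>\<^bsub>M\<^esub> m1 = r [^] n \<odot>\<^bsub>M\<^esub> m2"
      using Suc m1(1) unfolding colon_def scal_sub_def by blast
    have "s [^] Suc n \<odot>\<^bsub>M\<^esub> m = s [^] n \<odot>\<^bsub>M\<^esub> (r \<odot>\<^bsub>M\<^esub> m1)"
      using sC m m1(2) by (simp add: smult_assoc1)
    also have "\<dots> = r \<odot>\<^bsub>M\<^esub> (s [^] n \<odot>\<^bsub>M\<^esub> m1)"
      using sC r m1(1) by (simp add: smult_assoc1[symmetric] m_comm)
    also have "\<dots> = r \<odot>\<^bsub>M\<^esub> (r [^] n \<odot>\<^bsub>M\<^esub> m2)" using m2(2) by simp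
    also have "\<dots> = r [^] Suc n \<odot>\<^bsub>M\<^esub> m2"
      using r m2(1) by (simp add: smult_assoc1[symmetric] m_comm)
    finally show ?thesis unfolding scal_sub_def using m2(1) by blast
  qed
  then show ?case unfolding colon_def using sC by simp
qed

lemma graded_radical_colon_scal_sub_subset_iff:
  assumes r: "r \<in> Rg d" and Q: "submodule Q R M"
  shows "graded_radical R Rg (colon R M (scal_sub M r)) \<subseteq> graded_radical R Rg (colon R M Q)
    \<longleftrightarrow> r \<in> graded_radical R Rg (colon R M Q)"
proof
  have rC: "r \<in> carrier R" using r R.grading_subset_carrier by blast
  then have "r \<in> colon R M (scal_sub M r)" unfolding colon_def scal_sub_def by blast
  then have "r \<in> graded_radical R Rg (colon R M (scal_sub M r))"
    using graded_ideal_subset_graded_radical[OF colon_graded_ideal[OF graded_submodule_scal_sub[OF r]]]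
    by blast
  then show "graded_radical R Rg (colon R M (scal_sub M r)) \<subseteq> graded_radical R Rg (colon R M Q)
    \<Longrightarrow> r \<in> graded_radical R Rg (colon R M Q)" by blast
next
  have rC: "r \<in> carrier R" using r R.grading_subset_carrier by blast
  assume "r \<in> graded_radical R Rg (colon R M Q)"
  then have "\<exists>n::nat. n > 0 \<and> r [^] n \<in> colon R M Q"
    using graded_radical_homogeneous_iff[OF r colon_ideal[OF Q]] by simp
  then obtain n :: nat where n: "n > 0" "r [^] n \<in> colon R M Q" by (elim exE conjE)
  show "graded_radical R Rg (colon R M (scal_sub M r)) \<subseteq> graded_radical R Rg (colon R M Q)"
  proof (rule graded_radical_mono_pow)
    fix s assume s: "s \<in> colon R M (scal_sub M r)"
    have "s [^] n \<odot>\<^bsub>M\<^esub> m \<in> Q" if m: "m \<in> carrier M" for m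
    proof -
      obtain m' where "m' \<in> carrier M" "s [^] n \<odot>\<^bsub>M\<^esub> m = r [^] n \<odot>\<^bsub>M\<^esub> m'"
        using colon_scal_sub_nat_pow[OF s rC, of n] m unfolding colon_def scal_sub_def by blast
      then show ?thesis using n(2) unfolding colon_def by simp
    qed
    then have "s [^] n \<in> colon R M Q" unfolding colon_def using s by (simp add: colon_def)
    then show "\<exists>n::nat. n > 0 \<and> s [^] n \<in> colon R M Q" using n(1) by blast
  qed
qed

lemma qp_spec_submodule: "Q \<in> qp_spec R Rg M Mg \<Longrightarrow> graded_submodule R M Mg Q"
  unfolding qp_spec_def graded_qp_submodule_def by simp

lemma mem_GX_iff:
  assumes r: "r \<in> Rg d"
  shows "Q \<in> GX R Rg M Mg r \<longleftrightarrow>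
    Q \<in> qp_spec R Rg M Mg \<and> r \<notin> graded_prime_hull R Rg (colon R M Q)"
proof -
  have "Q \<in> qp_V R Rg M Mg (scal_sub M r) \<longleftrightarrow> r \<in> graded_prime_hull R Rg (colon R M Q)"
    if Q: "Q \<in> qp_spec R Rg M Mg"
  proof -
    have QG: "graded_submodule R M Mg Q" using qp_spec_submodule[OF Q] .
    then have Qs: "submodule Q R M" unfolding graded_submodule_def by simp
    have "Q \<in> qp_V R Rg M Mg (scal_sub M r) \<longleftrightarrow>
      graded_radical R Rg (colon R M (scal_sub M r)) \<subseteq> graded_radical R Rg (colon R M Q)"
      using Q unfolding qp_V_def by simp
    also have "\<dots> \<longleftrightarrow> r \<in> graded_radical R Rg (colon R M Q)"
      by (rule graded_radical_colon_scal_sub_subset_iff[OF r Qs])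
    finally show ?thesis using graded_radical_eq_graded_prime_hull[OF colon_graded_ideal[OF QG]] by simp
  qed
  then show ?thesis unfolding GX_def by blast
qed

lemma mem_qp_V_iff:
  assumes K: "graded_submodule R M Mg K" and Q: "Q \<in> qp_spec R Rg M Mg"
  shows "Q \<in> qp_V R Rg M Mg K \<longleftrightarrow> colon R M K \<subseteq> graded_prime_hull R Rg (colon R M Q)"
proof -
  have "colon R M K \<subseteq> carrier R" unfolding colon_def by blast
  then show ?thesis
    using Q graded_prime_hull_subset_iff graded_radical_eq_graded_prime_hull[OF colon_graded_ideal]
      K qp_spec_submodule[OF Q]
    unfolding qp_V_def by simp
qed

lemma qz_open_GX:
  assumes "r \<in> Rg d"
  shows "qz_open R Rg M Mg (GX R Rg M Mg r)"
  unfolding qz_open_def GX_def using graded_submodule_scal_sub[OF assms] by (intro exI conjI) simp_all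

lemma qp_spec_eq_GX_one: "qp_spec R Rg M Mg = GX R Rg M Mg \<one>"
proof -
  have one_notin: "\<one> \<notin> graded_radical R Rg (colon R M Q)" if Q: "Q \<in> qp_spec R Rg M Mg" for Q
  proof
    have Qs: "submodule Q R M" using qp_spec_submodule[OF Q] unfolding graded_submodule_def by simp
    assume "\<one> \<in> graded_radical R Rg (colon R M Q)"
    then have "\<one> \<in> colon R M Q"
      using graded_radical_homogeneous_iff[OF one_homogeneous colon_ideal[OF Qs]] by simp
    then have "carrier M \<subseteq> Q" unfolding colon_def by (simp add: subset_iff)
    then have "Q = carrier M"
      using subgroup.subset[OF submodule.axioms(1)[OF Qs]] by (intro subset_antisym) simp_all
    then show False using Q unfolding qp_spec_def graded_qp_submodule_def by simp
  qed
  have "Q \<in> qp_spec R Rg M Mg \<longleftrightarrow> Q \<in> GX R Rg M Mg \<one>" for Q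
    using one_notin[of Q] mem_GX_iff[OF one_homogeneous, of Q]
      graded_radical_eq_graded_prime_hull[OF colon_graded_ideal[OF qp_spec_submodule], of Q]
    by (cases "Q \<in> qp_spec R Rg M Mg") simp_all
  then show ?thesis by blast
qed

lemma exists_qp_spec_colon_eq:
  assumes surj: "\<forall>q \<in> qp_spec_ring (Rbar R M) (Rbar_grading R Rg M).
      \<exists>Q \<in> qp_spec R Rg M Mg. psi_q R M Q = q"
    and p: "graded_prime_ideal R Rg p" and Ann_p: "Ann R M \<subseteq> p"
  shows "\<exists>Q \<in> qp_spec R Rg M Mg. colon R M Q = p"
proof -
  have Ann: "ideal (Ann R M) R" using graded_ideal_Ann unfolding graded_ideal_def by simp
  have pI: "ideal p R" using p unfolding graded_prime_ideal_def graded_ideal_def by simp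
  have grading: "Rbar_grading R Rg M = (\<lambda>g. (+>) (Ann R M) ` Rg g)"
    by (simp add: fun_eq_iff Rbar_grading_def)
  have "graded_qp_ideal (Rbar R M) (Rbar_grading R Rg M) ((+>) (Ann R M) ` p)"
    unfolding grading Rbar_def
    by (rule ring.graded_qp_ideal_if_graded_prime[OF ideal.quotient_is_ring[OF Ann]
          graded_prime_ideal_quotient_image[OF graded_ideal_Ann p Ann_p]])
  then have "\<exists>Q \<in> qp_spec R Rg M Mg. psi_q R M Q = (+>) (Ann R M) ` p"
    using surj unfolding qp_spec_ring_def by simp
  then obtain Q where Q: "Q \<in> qp_spec R Rg M Mg" "(+>) (Ann R M) ` colon R M Q = (+>) (Ann R M) ` p"
    unfolding psi_q_def by metis
  have "submodule Q R M" using qp_spec_submodule[OF Q(1)] unfolding graded_submodule_def by simp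
  then have "colon R M Q = p"
    using rcos_image_inj[OF Ann colon_ideal pI Ann_subset_colon Ann_p Q(2)] by simp
  then show ?thesis using Q(1) by blast
qed

lemma GX_subset_cover_if_graded_prime_hull:
  assumes r: "r \<in> Rg d" and K: "\<And>i. i \<in> A \<Longrightarrow> graded_submodule R M Mg (K i)"
    and hull: "r \<in> graded_prime_hull R Rg (Ann R M \<union> (\<Union>i\<in>A. colon R M (K i)))"
  shows "GX R Rg M Mg r \<subseteq> (\<Union>i\<in>A. qp_spec R Rg M Mg - qp_V R Rg M Mg (K i))"
proof
  fix Q assume "Q \<in> GX R Rg M Mg r"
  then have Q: "Q \<in> qp_spec R Rg M Mg" and r_Q: "r \<notin> graded_prime_hull R Rg (colon R M Q)"
    using mem_GX_iff[OF r] by simp_all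
  show "Q \<in> (\<Union>i\<in>A. qp_spec R Rg M Mg - qp_V R Rg M Mg (K i))"
  proof (rule ccontr)
    assume "Q \<notin> (\<Union>i\<in>A. qp_spec R Rg M Mg - qp_V R Rg M Mg (K i))"
    then have "colon R M (K i) \<subseteq> graded_prime_hull R Rg (colon R M Q)" if "i \<in> A" for i
      using Q that mem_qp_V_iff[OF K Q] by blast
    moreover have "Ann R M \<subseteq> graded_prime_hull R Rg (colon R M Q)"
    proof -
      have "submodule Q R M" using qp_spec_submodule[OF Q] unfolding graded_submodule_def by simp
      then have "Ann R M \<subseteq> colon R M Q" by (rule Ann_subset_colon)
      also have "\<dots> \<subseteq> graded_prime_hull R Rg (colon R M Q)"
        by (rule subset_graded_prime_hull) (auto simp: colon_def)
      finally show ?thesis .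
    qed
    ultimately have "graded_prime_hull R Rg (Ann R M \<union> (\<Union>i\<in>A. colon R M (K i)))
        \<subseteq> graded_prime_hull R Rg (colon R M Q)"
      by (subst graded_prime_hull_subset_iff) (auto simp: Ann_def colon_def)
    then show False using hull r_Q by blast
  qed
qed

lemma graded_prime_hull_if_GX_subset_cover:
  assumes surj: "\<And>p. graded_prime_ideal R Rg p \<Longrightarrow> Ann R M \<subseteq> p \<Longrightarrow>
      \<exists>Q \<in> qp_spec R Rg M Mg. colon R M Q = p"
    and r: "r \<in> Rg d" and K: "\<And>i. i \<in> A \<Longrightarrow> graded_submodule R M Mg (K i)"
    and cover: "GX R Rg M Mg r \<subseteq> (\<Union>i\<in>A. qp_spec R Rg M Mg - qp_V R Rg M Mg (K i))"
  shows "r \<in> graded_prime_hull R Rg (Ann R M \<union> (\<Union>i\<in>A. colon R M (K i)))"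
  unfolding mem_graded_prime_hull_iff
proof (intro conjI allI impI)
  show "r \<in> carrier R" using r R.grading_subset_carrier by blast
  fix p assume p: "graded_prime_ideal R Rg p \<and> Ann R M \<union> (\<Union>i\<in>A. colon R M (K i)) \<subseteq> p"
  show "r \<in> p"
  proof (rule ccontr)
    assume "r \<notin> p"
    obtain Q where Q: "Q \<in> qp_spec R Rg M Mg" "colon R M Q = p" using surj p by blast
    then have hull_Q: "graded_prime_hull R Rg (colon R M Q) = p"
      using graded_prime_hull_prime p by simp
    then have "Q \<in> GX R Rg M Mg r" using mem_GX_iff[OF r] Q(1) \<open>r \<notin> p\<close> by simp
    then obtain i where i: "i \<in> A" "Q \<notin> qp_V R Rg M Mg (K i)" using cover by blast
    moreover have "colon R M (K i) \<subseteq> p" using p i(1) by blast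
    ultimately show False using mem_qp_V_iff[OF K Q(1)] hull_Q by simp
  qed
qed

lemma GX_quasi_compact:
  assumes surj: "\<And>p. graded_prime_ideal R Rg p \<Longrightarrow> Ann R M \<subseteq> p \<Longrightarrow>
      \<exists>Q \<in> qp_spec R Rg M Mg. colon R M Q = p"
    and r: "r \<in> Rg d"
  shows "qz_quasi_compact R Rg M Mg (GX R Rg M Mg r)"
  unfolding qz_quasi_compact_def
proof (intro allI impI, elim conjE)
  fix \<U> assume opens: "\<forall>U\<in>\<U>. qz_open R Rg M Mg U" and cover: "GX R Rg M Mg r \<subseteq> \<Union>\<U>"
  obtain K where K: "\<And>U. U \<in> \<U> \<Longrightarrow> graded_submodule R M Mg (K U)"
    and U: "\<And>U. U \<in> \<U> \<Longrightarrow> U = qp_spec R Rg M Mg - qp_V R Rg M Mg (K U)"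
    using opens unfolding qz_open_def by metis
  have union: "\<Union>\<F> = (\<Union>U\<in>\<F>. qp_spec R Rg M Mg - qp_V R Rg M Mg (K U))" if "\<F> \<subseteq> \<U>" for \<F>
    using U that by blast
  have "r \<in> graded_prime_hull R Rg (Ann R M \<union> (\<Union>U\<in>\<U>. colon R M (K U)))"
    using graded_prime_hull_if_GX_subset_cover[OF surj r K] cover union[of \<U>] by simp
  then obtain \<F> where \<F>: "\<F> \<subseteq> \<U>" "finite \<F>"
    and hull: "r \<in> graded_prime_hull R Rg (Ann R M \<union> (\<Union>U\<in>\<F>. colon R M (K U)))"
    using graded_prime_hull_finite_subfamily[of r "Ann R M" \<U> "\<lambda>U. colon R M (K U)"] r
    unfolding hom_elems_def by (auto simp: Ann_def colon_def)
  have "GX R Rg M Mg r \<subseteq> \<Union>\<F>"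
    using GX_subset_cover_if_graded_prime_hull[OF r _ hull] K \<F>(1) union[OF \<F>(1)] by blast
  then show "\<exists>\<F>\<subseteq>\<U>. finite \<F> \<and> GX R Rg M Mg r \<subseteq> \<Union>\<F>" using \<F> by blast
qed

end

theorem theorem3p16:
  fixes R :: "('a, 'c) ring_scheme" and Rg :: "'g::group_add \<Rightarrow> 'a set"
    and M :: "('a, 'b) module" and Mg :: "'g \<Rightarrow> 'b set"
  assumes "graded_module R Rg M Mg"
    and "\<forall>q \<in> qp_spec_ring (Rbar R M) (Rbar_grading R Rg M).
           \<exists>Q \<in> qp_spec R Rg M Mg. psi_q R M Q = q"
  shows "(\<forall>r \<in> hom_elems Rg. qz_open R Rg M Mg (GX R Rg M Mg r)
            \<and> qz_quasi_compact R Rg M Mg (GX R Rg M Mg r))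
         \<and> qz_quasi_compact R Rg M Mg (qp_spec R Rg M Mg)"
proof -
  interpret gr_module R M Rg Mg
    using assms(1) by (intro gr_module.intro gr_module_axioms.intro) (simp_all add: graded_module_def)
  note surj = exists_qp_spec_colon_eq[OF assms(2)]
  have "qz_open R Rg M Mg (GX R Rg M Mg r) \<and> qz_quasi_compact R Rg M Mg (GX R Rg M Mg r)"
    if r: "r \<in> hom_elems Rg" for r
  proof -
    obtain d where "r \<in> Rg d" using r unfolding hom_elems_def by blast
    then show ?thesis using qz_open_GX GX_quasi_compact[OF surj] by blast
  qed
  moreover have "qz_quasi_compact R Rg M Mg (qp_spec R Rg M Mg)"
    using GX_quasi_compact[OF surj one_homogeneous] qp_spec_eq_GX_one by simp
  ultimately show ?thesis by blast
qed

end
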